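(* Under the standing assumptions, suppose $\lambda_i(\pi)\neq 0$ for some $i\in I$. Define $\pi'\in\mathbb{R}^n$ by $\pi'_j=\pi_j$ for $j\neq i$ and $\pi'_i=\pi_i+\lambda_i(\pi)$, and define $\pi'_0=\pi_0$ if $i\in S^{+}(\pi)$ and $\pi'_0=\pi_0+\lambda_i(\pi)$ otherwise. Then: (1) $\pi'^\top x\le\pi'_0$ holds for all $x\in X$; (2) $F(\pi,\pi_0)\subset F(\pi',\pi'_0)$ and $\dim F(\pi',\pi'_0)\ge \dim F(\pi,\pi_0)+1$; (3) for every $\bar x\in[0,1]^n$ with $\pi^\top\bar x>\pi_0$ we have $\pi'^\top\bar x>\pi'_0$.
   Context: Let $n\ge 1$, $I=\{1,\dots,n\}$ and $X\subseteq\{0,1\}^n$. Standing assumptions: (a) the inequality $\pi^\top x\le \pi_0$ is valid for $X$ and supports $\mathrm{conv}(X)$, i.e. $\pi_0=\max_{x\in X}\pi^\top x$; (b) for every $i\in I$ there exist $x,x'\in X$ with $x_i=0$ and $x'_i=1$. For any $(\sigma,\sigma_0)$, the face is $F(\sigma,\sigma_0):=\{x\in\mathrm{conv}(X):\sigma^\top x=\sigma_0\}$. The disjunctive slack vector $\lambda(\pi)\in\mathbb{R}^n$ is defined by $\lambda^0_i(\pi):=\max_{x\in X}\{\pi^\top x: x_i=0\}$, $\lambda^1_i(\pi):=\max_{x\in X}\{\pi^\top x:x_i=1\}$ and $\lambda_i(\pi):=\lambda^0_i(\pi)-\lambda^1_i(\pi)$ for $i\in I$. Let $S^{-}(\pi)=\{i\in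 I:\lambda_i(\pi)<0\}$, $S^{0}(\pi)=\{i\in I:\lambda_i(\pi)=0\}$, $S^{+}(\pi)=\{i\in I:\lambda_i(\pi)>0\}$. *)

theory Defs
  imports "HOL-Analysis.Analysis"
begin

text \<open>Points of R^n are vectors of type real^'n (index set I = UNIV :: 'n set).\<close>

definition face :: "(real^'n) set \<Rightarrow> real^'n \<Rightarrow> real \<Rightarrow> (real^'n) set" where
  "face X \<sigma> \<sigma>0 = {x \<in> convex hull X. \<sigma> \<bullet> x = \<sigma>0}"

definition lam0 :: "(real^'n) set \<Rightarrow> real^'n \<Rightarrow> 'n \<Rightarrow> real" where
  "lam0 X \<pi> i = Max {\<pi> \<bullet> x | x. x \<in> X \<and> x $ i = 0}"

definition lam1 :: "(real^'n) set \<Rightarrow> real^'n \<Rightarrow> 'n \<Rightarrow> real" where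
  "lam1 X \<pi> i = Max {\<pi> \<bullet> x | x. x \<in> X \<and> x $ i = 1}"

definition lam :: "(real^'n) set \<Rightarrow> real^'n \<Rightarrow> 'n \<Rightarrow> real" where
  "lam X \<pi> i = lam0 X \<pi> i - lam1 X \<pi> i"

end

theory Submission
  imports Defs
begin

text \<open>
  Since X is binary, the valid right-hand side is \<pi>0 = max (lam0 X \<pi> i) (lam1 X \<pi> i), and
  the lifted inequality reads \<pi> \<bullet> x \<le> \<pi>0 on the slice x $ i = c and
  \<pi> \<bullet> x \<le> \<pi>0 + |lam X \<pi> i| on the other slice, where c \<in> {0,1} is the slice
  attaining \<pi>0. Hence it is valid, it coincides with \<pi> \<bullet> x \<le> \<pi>0 on x $ i = c, and it
  is tight at a maximiser of the other slice. The old face lies in the hyperplane x $ i = c,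
  the new face additionally contains a point off it, which raises the dimension; on the
  unit cube the added term lam X \<pi> i * x $ i only strengthens violations.
\<close>

lemma binary_set_finite:
  fixes X :: "(real^'n) set"
  assumes "\<forall>x\<in>X. \<forall>j. x $ j = 0 \<or> x $ j = 1"
  shows "finite X"
proof -
  have "X \<subseteq> (\<lambda>f. \<chi> j. f j) ` (UNIV \<rightarrow>\<^sub>E {0::real, 1})"
  proof
    fix x assume "x \<in> X"
    then have "(\<lambda>j. x $ j) \<in> UNIV \<rightarrow>\<^sub>E {0::real, 1}" using assms by auto
    then show "x \<in> (\<lambda>f. \<chi> j. f j) ` (UNIV \<rightarrow>\<^sub>E {0::real, 1})"
      by (intro image_eqI[of _ _ "\<lambda>j. x $ j"]) simp_all
  qed
  moreover have "finite (UNIV \<rightarrow>\<^sub>E {0::real, 1} :: ('n \<Rightarrow> real) set)"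
    by (simp add: finite_PiE)
  ultimately show ?thesis using finite_subset by blast
qed

lemma convex_hull_inner_le:
  fixes X :: "'a::real_inner set"
  assumes "\<forall>y\<in>X. a \<bullet> y \<le> b" and "x \<in> convex hull X"
  shows "a \<bullet> x \<le> b"
proof -
  have "convex hull X \<subseteq> {y. a \<bullet> y \<le> b}"
    using assms(1) by (intro hull_minimal) (auto simp: convex_halfspace_le)
  then show ?thesis using assms(2) by auto
qed

lemma convex_hull_binary_coordinate_bounds:
  fixes X :: "(real^'n) set"
  assumes "\<forall>y\<in>X. \<forall>j. y $ j = 0 \<or> y $ j = 1" and "x \<in> convex hull X"
  shows "0 \<le> x $ i" and "x $ i \<le> 1"
proof -
  have "\<forall>y\<in>X. axis i (-1) \<bullet> y \<le> 0" "\<forall>y\<in>X. axis i 1 \<bullet> y \<le> 1"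
    using assms(1) by (auto simp: inner_axis', (metis order.refl zero_le_one)+)
  then show "0 \<le> x $ i" and "x $ i \<le> 1"
    using convex_hull_inner_le[OF _ assms(2)] by (fastforce simp: inner_axis')+
qed

lemma aff_dim_grows_by_point_off_hyperplane:
  fixes F G :: "'a::euclidean_space set"
  assumes "F \<subseteq> G" and "\<forall>x\<in>F. a \<bullet> x = b" and "p \<in> G" and "a \<bullet> p \<noteq> b"
  shows "F \<subset> G" and "aff_dim G \<ge> aff_dim F + 1"
proof -
  show "F \<subset> G" using assms by blast
  have "affine hull F \<subseteq> {x. a \<bullet> x = b}"
    using assms(2) by (intro hull_minimal) (auto simp: affine_hyperplane)
  then have "p \<notin> affine hull F" using assms(4) by blast
  then have "aff_dim (insert p F) = aff_dim F + 1" by (simp add: aff_dim_insert)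
  moreover have "aff_dim (insert p F) \<le> aff_dim G"
    using assms(1,3) by (intro aff_dim_subset) blast
  ultimately show "aff_dim G \<ge> aff_dim F + 1" by simp
qed

lemma Max_slice_upper:
  fixes X :: "(real^'n) set"
  assumes "finite X" and "x \<in> X" and "x $ i = c"
  shows "\<pi> \<bullet> x \<le> Max {\<pi> \<bullet> y | y. y \<in> X \<and> y $ i = c}"
  using assms by (intro Max_ge) auto

lemma Max_slice_attained:
  fixes X :: "(real^'n) set"
  assumes "finite X" and "\<exists>x\<in>X. x $ i = c"
  shows "\<exists>x\<in>X. x $ i = c \<and> \<pi> \<bullet> x = Max {\<pi> \<bullet> y | y. y \<in> X \<and> y $ i = c}"
proof -
  have "Max {\<pi> \<bullet> y | y. y \<in> X \<and> y $ i = c} \<in> {\<pi> \<bullet> y | y. y \<in> X \<and> y $ i = c}"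
    using assms by (intro Max_in) auto
  then show ?thesis by auto
qed

locale coordinate_lifting =
  fixes X :: "(real^'n) set" and \<pi> :: "real^'n" and \<pi>0 :: real and i :: 'n
  assumes binary: "\<forall>x\<in>X. \<forall>j. x $ j = 0 \<or> x $ j = 1"
    and valid: "\<forall>x\<in>X. \<pi> \<bullet> x \<le> \<pi>0"
    and supp: "\<exists>x\<in>X. \<pi> \<bullet> x = \<pi>0"
    and nontriv: "\<forall>j. (\<exists>x\<in>X. x $ j = 0) \<and> (\<exists>x\<in>X. x $ j = 1)"
    and lam_nz: "lam X \<pi> i \<noteq> 0"
begin

definition lifted :: "real^'n" where
  "lifted = (\<chi> j. if j = i then \<pi> $ j + lam X \<pi> i else \<pi> $ j)"

definition lifted_rhs :: real where
  "lifted_rhs = (if lam X \<pi> i > 0 then \<pi>0 else \<pi>0 + lam X \<pi> i)"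

text \<open>The value of x $ i on the face F(\<pi>, \<pi>0).\<close>
definition tight_coord :: real where
  "tight_coord = (if lam X \<pi> i > 0 then 0 else 1)"

lemma finite_X: "finite X"
  using binary by (rule binary_set_finite)

lemma lam0_upper: "x \<in> X \<Longrightarrow> x $ i = 0 \<Longrightarrow> \<pi> \<bullet> x \<le> lam0 X \<pi> i"
  unfolding lam0_def by (rule Max_slice_upper[OF finite_X])

lemma lam1_upper: "x \<in> X \<Longrightarrow> x $ i = 1 \<Longrightarrow> \<pi> \<bullet> x \<le> lam1 X \<pi> i"
  unfolding lam1_def by (rule Max_slice_upper[OF finite_X])

lemma lam0_attained: "\<exists>x\<in>X. x $ i = 0 \<and> \<pi> \<bullet> x = lam0 X \<pi> i"
  unfolding lam0_def using nontriv by (intro Max_slice_attained[OF finite_X]) blast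

lemma lam1_attained: "\<exists>x\<in>X. x $ i = 1 \<and> \<pi> \<bullet> x = lam1 X \<pi> i"
  unfolding lam1_def using nontriv by (intro Max_slice_attained[OF finite_X]) blast

lemma rhs_eq_max_lam: "\<pi>0 = max (lam0 X \<pi> i) (lam1 X \<pi> i)"
proof -
  obtain x where "x \<in> X" "\<pi> \<bullet> x = \<pi>0" using supp by blast
  then have "\<pi>0 \<le> max (lam0 X \<pi> i) (lam1 X \<pi> i)"
    using binary lam0_upper lam1_upper by force
  moreover have "lam0 X \<pi> i \<le> \<pi>0" and "lam1 X \<pi> i \<le> \<pi>0"
    using lam0_attained lam1_attained valid by auto
  ultimately show ?thesis by linarith
qed

lemma lifted_inner: "lifted \<bullet> x = \<pi> \<bullet> x + lam X \<pi> i * x $ i"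
proof -
  have "lifted = \<pi> + axis i (lam X \<pi> i)"
    unfolding lifted_def by (simp add: vec_eq_iff axis_def)
  then show ?thesis by (simp add: inner_add_left inner_axis')
qed

lemma lifted_rhs_eq: "lifted_rhs = \<pi>0 + lam X \<pi> i * tight_coord"
  unfolding lifted_rhs_def tight_coord_def by simp

lemma lifted_valid: "\<forall>x\<in>X. lifted \<bullet> x \<le> lifted_rhs"
proof
  fix x assume "x \<in> X"
  then show "lifted \<bullet> x \<le> lifted_rhs"
    using binary lam0_upper lam1_upper rhs_eq_max_lam
    unfolding lifted_inner lifted_rhs_eq tight_coord_def lam_def
    by (cases "x $ i = 0") force+
qed

lemma face_in_tight_hyperplane:
  assumes "x \<in> face X \<pi> \<pi>0"
  shows "x $ i = tight_coord"
proof -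
  have x: "x \<in> convex hull X" "\<pi> \<bullet> x = \<pi>0" using assms unfolding face_def by auto
  have "lam X \<pi> i * x $ i \<le> lam X \<pi> i * tight_coord"
    using convex_hull_inner_le[OF lifted_valid x(1)] x(2)
    unfolding lifted_inner lifted_rhs_eq by simp
  with convex_hull_binary_coordinate_bounds[OF binary x(1), of i] lam_nz
  show ?thesis unfolding tight_coord_def
    by (cases "lam X \<pi> i > 0") (auto simp: mult_le_cancel_left mult_le_0_iff)
qed

lemma face_subset_lifted_face: "face X \<pi> \<pi>0 \<subseteq> face X lifted lifted_rhs"
  using face_in_tight_hyperplane unfolding face_def lifted_inner lifted_rhs_eq by auto

text \<open>A maximiser of the slice x $ i \<noteq> tight_coord becomes tight.\<close>
lemma lifted_face_point_off_hyperplane: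
  obtains p where "p \<in> face X lifted lifted_rhs" and "p $ i \<noteq> tight_coord"
proof (cases "lam X \<pi> i > 0")
  case True
  with lam1_attained obtain x where "x \<in> X" "x $ i = 1" "\<pi> \<bullet> x = lam1 X \<pi> i" by blast
  with True show ?thesis
    using that[of x] rhs_eq_max_lam hull_inc[of x X]
    unfolding face_def lifted_inner lifted_rhs_eq tight_coord_def lam_def by auto
next
  case False
  with lam0_attained obtain x where "x \<in> X" "x $ i = 0" "\<pi> \<bullet> x = lam0 X \<pi> i" by blast
  with False lam_nz show ?thesis
    using that[of x] rhs_eq_max_lam hull_inc[of x X]
    unfolding face_def lifted_inner lifted_rhs_eq tight_coord_def lam_def by auto
qed

lemma lifted_cuts_violators:
  assumes "\<forall>j. 0 \<le> xb $ j \<and> xb $ j \<le> 1" and "\<pi> \<bullet> xb > \<pi>0"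
  shows "lifted \<bullet> xb > lifted_rhs"
proof (cases "lam X \<pi> i > 0")
  case True
  then have "lam X \<pi> i * xb $ i \<ge> 0" using assms(1) by simp
  with True assms(2) show ?thesis unfolding lifted_inner lifted_rhs_def by simp
next
  case False
  then have "lam X \<pi> i * xb $ i \<ge> lam X \<pi> i * 1"
    using assms(1) by (intro mult_left_mono_neg) auto
  with False assms(2) show ?thesis unfolding lifted_inner lifted_rhs_def by simp
qed

end

theorem theorem1:
  fixes X :: "(real^'n) set" and \<pi> :: "real^'n" and \<pi>0 :: real and i :: 'n
  assumes binary: "\<forall>x\<in>X. \<forall>j. x $ j = 0 \<or> x $ j = 1"
    and valid: "\<forall>x\<in>X. \<pi> \<bullet> x \<le> \<pi>0"
    and supp: "\<exists>x\<in>X. \<pi> \<bullet> x = \<pi>0"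
    and nontriv: "\<forall>j. (\<exists>x\<in>X. x $ j = 0) \<and> (\<exists>x\<in>X. x $ j = 1)"
    and lam_nz: "lam X \<pi> i \<noteq> 0"
  defines "\<pi>' \<equiv> (\<chi> j. if j = i then \<pi> $ j + lam X \<pi> i else \<pi> $ j)"
    and "\<pi>0' \<equiv> (if lam X \<pi> i > 0 then \<pi>0 else \<pi>0 + lam X \<pi> i)"
  shows "(\<forall>x\<in>X. \<pi>' \<bullet> x \<le> \<pi>0')
    \<and> face X \<pi> \<pi>0 \<subset> face X \<pi>' \<pi>0'
    \<and> aff_dim (face X \<pi>' \<pi>0') \<ge> aff_dim (face X \<pi> \<pi>0) + 1
    \<and> (\<forall>xb::real^'n. (\<forall>j. 0 \<le> xb $ j \<and> xb $ j \<le> 1) \<and> \<pi> \<bullet> xb > \<pi>0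
          \<longrightarrow> \<pi>' \<bullet> xb > \<pi>0')"
proof -
  interpret L: coordinate_lifting X \<pi> \<pi>0 i
    using assms by unfold_locales
  have lifted: "\<pi>' = L.lifted" "\<pi>0' = L.lifted_rhs"
    unfolding \<pi>'_def \<pi>0'_def L.lifted_def L.lifted_rhs_def by simp_all
  obtain p where p: "p \<in> face X \<pi>' \<pi>0'" "p $ i \<noteq> L.tight_coord"
    using L.lifted_face_point_off_hyperplane unfolding lifted .
  have "face X \<pi> \<pi>0 \<subset> face X \<pi>' \<pi>0'"
    and "aff_dim (face X \<pi>' \<pi>0') \<ge> aff_dim (face X \<pi> \<pi>0) + 1"
    using aff_dim_grows_by_point_off_hyperplane[of "face X \<pi> \<pi>0" "face X \<pi>' \<pi>0'"
        "axis i 1" L.tight_coord p]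
      L.face_subset_lifted_face L.face_in_tight_hyperplane p
    unfolding lifted by (auto simp: inner_axis')
  then show ?thesis
    using L.lifted_valid L.lifted_cuts_violators unfolding lifted by blast
qed

end
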